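(* Fix a treatment group $d$, a post-treatment target age $a$, and a control group $d'$ with $d'>a\ge d$. Suppose the No Anticipation assumption holds for both genders $g\in\{f,m\}$ and both groups $d$ and $d'$, and suppose $$\frac{\gamma_{\mathrm{PT}}(f,d,d',a)}{APO(f,d,\infty,a)}=\frac{\gamma_{\mathrm{PT}}(m,d,d',a)}{APO(m,d,\infty,a)}.$$ Then the effect of parenthood on the gender earnings ratio satisfies $$\Delta\rho(d,a)=\frac{\mathbb{E}[Y_a\mid G=f,D=d]}{\mathbb{E}[Y_a\mid G=m,D=d]}-\frac{\delta_{\mathrm{APO}}(f,d,d',a)}{\delta_{\mathrm{APO}}(m,d,d',a)}.$$
   Context: Population of individuals with gender $G\in\{f,m\}$ and age at first childbirth $D$ (with $D=\infty$ meaning never). For each age $a$ and each (possibly counterfactual) first-birth age $d'\in\mathbb{N}\cup\{\infty\}$ there is a potential outcome (earnings) $Y_a(d')$; observed earnings satisfy consistency $Y_a=Y_a(D)$. Define $APO(g,d,d',a)=\mathbb{E}[Y_a(d')\mid G=g,D=d]$. Define $\rho(d,d',a)=APO(f,d,d',a)/APO(m,d,d',a)$ and $\Delta\rho(d,a)=\rho(d,d,a)-\rho(d,\infty,a)$. Define $\delta_{\mathrm{APO}}(g,d,d',a)=\mathbb{E}[Y_{d-1}\mid G=g,D=d]+\mathbb{E}[Y_a-Y_{d-1}\mid G=g,D=d']$ and $\gamma_{\mathrm{PT}}(g,d,d',a)=APO(g,d,\infty,a)-APO(g,d,\infty,d-1)-[APO(g,d',\infty,a)-APO(g,d',\infty,d-1)]$.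 No Anticipation for gender $g$ and group $d$: $APO(g,d,d,b)=APO(g,d,\infty,b)$ for every age $b<d$. All denominators appearing are assumed nonzero. *)

theory Defs
  imports "HOL-Probability.Probability" "HOL-Library.Extended_Nat"
begin

datatype gender = Female | Male

text \<open>Population cell {G = g, D = d} (first-birth age d; \<infinity> = never).\<close>
definition cell :: "'s measure \<Rightarrow> ('s \<Rightarrow> gender) \<Rightarrow> ('s \<Rightarrow> enat) \<Rightarrow> gender \<Rightarrow> enat \<Rightarrow> 's set" where
  "cell M G D g d = {x \<in> space M. G x = g \<and> D x = d}"

definition cexp :: "'s measure \<Rightarrow> 's set \<Rightarrow> ('s \<Rightarrow> real) \<Rightarrow> real" where
  "cexp M A X = (LINT x:A|M. X x) / measure M A"

text \<open>Potential outcomes Y a d' x; APO(g,d,d',a) = E[Y_a(d') | G=g, D=d].\<close>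
definition APO :: "'s measure \<Rightarrow> ('s \<Rightarrow> gender) \<Rightarrow> ('s \<Rightarrow> enat) \<Rightarrow> (nat \<Rightarrow> enat \<Rightarrow> 's \<Rightarrow> real)
    \<Rightarrow> gender \<Rightarrow> enat \<Rightarrow> enat \<Rightarrow> nat \<Rightarrow> real" where
  "APO M G D Y g d d' a = cexp M (cell M G D g d) (Y a d')"

definition rho where
  "rho M G D Y d d' a = APO M G D Y Female d d' a / APO M G D Y Male d d' a"

definition Delta_rho where
  "Delta_rho M G D Y d a = rho M G D Y d d a - rho M G D Y d \<infinity> a"

definition delta_APO :: "'s measure \<Rightarrow> ('s \<Rightarrow> gender) \<Rightarrow> ('s \<Rightarrow> enat) \<Rightarrow> (nat \<Rightarrow> 's \<Rightarrow> real)
    \<Rightarrow> gender \<Rightarrow> nat \<Rightarrow> nat \<Rightarrow> nat \<Rightarrow> real" where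
  "delta_APO M G D Yobs g d d' a =
     cexp M (cell M G D g (enat d)) (Yobs (d - 1))
     + cexp M (cell M G D g (enat d')) (\<lambda>x. Yobs a x - Yobs (d - 1) x)"

definition gamma_PT :: "'s measure \<Rightarrow> ('s \<Rightarrow> gender) \<Rightarrow> ('s \<Rightarrow> enat) \<Rightarrow> (nat \<Rightarrow> enat \<Rightarrow> 's \<Rightarrow> real)
    \<Rightarrow> gender \<Rightarrow> nat \<Rightarrow> nat \<Rightarrow> nat \<Rightarrow> real" where
  "gamma_PT M G D Y g d d' a =
     APO M G D Y g (enat d) \<infinity> a - APO M G D Y g (enat d) \<infinity> (d - 1)
     - (APO M G D Y g (enat d') \<infinity> a - APO M G D Y g (enat d') \<infinity> (d - 1))"

definition no_anticipation :: "'s measure \<Rightarrow> ('s \<Rightarrow> gender) \<Rightarrow> ('s \<Rightarrow> enat) \<Rightarrow> (nat \<Rightarrow> enat \<Rightarrow> 's \<Rightarrow> real)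
    \<Rightarrow> gender \<Rightarrow> nat \<Rightarrow> bool" where
  "no_anticipation M G D Y g d \<longleftrightarrow>
     (\<forall>b < d. APO M G D Y g (enat d) (enat d) b = APO M G D Y g (enat d) \<infinity> b)"

end

theory Submission
  imports Defs
begin

text \<open>On the cell of group \<open>d\<close>, observed earnings are the potential outcomes under \<open>d\<close>, so
  \<open>\<delta>\<^sub>A\<^sub>P\<^sub>O\<close> is \<open>APO(g,d,\<infinity>,a)\<close> minus the parallel-trends bias \<open>\<gamma>\<^sub>P\<^sub>T\<close> once No Anticipation replaces
  every potential outcome before the first birth by the never-parent one. If the bias is
  the same fraction \<open>k\<close> of \<open>APO(g,d,\<infinity>,a)\<close> for both genders, the factor \<open>1 - k\<close> cancels in the
  ratio of the \<open>\<delta>\<^sub>A\<^sub>P\<^sub>O\<close>'s, which therefore identifies \<open>\<rho>(d,\<infinity>,a)\<close>.\<close>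

lemma cexp_cong:
  assumes "A \<in> sets M" and "\<And>x. x \<in> A \<Longrightarrow> X x = X' x"
  shows "cexp M A X = cexp M A X'"
  unfolding cexp_def using assms by (simp add: set_lebesgue_integral_cong)

lemma cexp_diff:
  assumes "set_integrable M A X" and "set_integrable M A X'"
  shows "cexp M A (\<lambda>x. X x - X' x) = cexp M A X - cexp M A X'"
  unfolding cexp_def using set_integral_diff(2)[OF assms] by (simp add: diff_divide_distrib)

lemma cexp_observed_eq_APO:
  assumes "cell M G D g e \<in> sets M"
    and "\<And>b x. x \<in> space M \<Longrightarrow> Yobs b x = Y b (D x) x"
  shows "cexp M (cell M G D g e) (Yobs b) = APO M G D Y g e e b"
  unfolding APO_def using assms by (intro cexp_cong) (auto simp: cell_def)

lemma cexp_observed_diff_eq_APO_diff: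
  assumes "cell M G D g e \<in> sets M"
    and "integrable M (Y b e)" and "integrable M (Y c e)"
    and "\<And>b x. x \<in> space M \<Longrightarrow> Yobs b x = Y b (D x) x"
  shows "cexp M (cell M G D g e) (\<lambda>x. Yobs b x - Yobs c x)
           = APO M G D Y g e e b - APO M G D Y g e e c"
proof -
  have set_integ: "set_integrable M (cell M G D g e) (Y b' e)" if "integrable M (Y b' e)" for b'
    unfolding set_integrable_def using assms(1) that by (rule integrable_mult_indicator)
  have "cexp M (cell M G D g e) (\<lambda>x. Yobs b x - Yobs c x)
          = cexp M (cell M G D g e) (\<lambda>x. Y b e x - Y c e x)"
    using assms(1,4) by (intro cexp_cong) (auto simp: cell_def)
  also have "\<dots> = APO M G D Y g e e b - APO M G D Y g e e c"
    unfolding APO_def using assms(2,3) by (intro cexp_diff set_integ)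
  finally show ?thesis .
qed

lemma delta_APO_eq_APO_never_minus_gamma_PT:
  assumes meas_cells: "\<And>e. cell M G D g e \<in> sets M"
    and integ: "\<And>b e. integrable M (Y b e)"
    and consistency: "\<And>b x. x \<in> space M \<Longrightarrow> Yobs b x = Y b (D x) x"
    and "1 \<le> d" and "d \<le> a" and "a < d'"
    and NA: "no_anticipation M G D Y g d" "no_anticipation M G D Y g d'"
  shows "delta_APO M G D Yobs g d d' a = APO M G D Y g (enat d) \<infinity> a - gamma_PT M G D Y g d d' a"
proof -
  have "d - 1 < d" "d - 1 < d'" using assms(4-6) by simp_all
  then have "APO M G D Y g (enat d) (enat d) (d - 1) = APO M G D Y g (enat d) \<infinity> (d - 1)"
    "APO M G D Y g (enat d') (enat d') (d - 1) = APO M G D Y g (enat d') \<infinity> (d - 1)"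
    "APO M G D Y g (enat d') (enat d') a = APO M G D Y g (enat d') \<infinity> a"
    using NA \<open>a < d'\<close> unfolding no_anticipation_def by simp_all
  then show ?thesis
    unfolding delta_APO_def gamma_PT_def
    using cexp_observed_eq_APO[where Yobs = Yobs and Y = Y, OF meas_cells consistency]
      cexp_observed_diff_eq_APO_diff[where Yobs = Yobs and Y = Y, OF meas_cells integ integ consistency]
    by simp
qed

lemma ratio_minus_proportional_bias:
  fixes Af Am \<gamma>f \<gamma>m :: "'a :: field"
  assumes "Af \<noteq> 0" "Am \<noteq> 0" "Am - \<gamma>m \<noteq> 0" and "\<gamma>f / Af = \<gamma>m / Am"
  shows "(Af - \<gamma>f) / (Am - \<gamma>m) = Af / Am"
proof -
  define k where "k = \<gamma>m / Am"
  have "\<gamma>f = k * Af" "\<gamma>m = k * Am"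
    using assms unfolding k_def by (simp_all add: field_simps)
  moreover from this have "1 - k \<noteq> 0" using assms(3) by auto
  moreover have "Af - k * Af = (1 - k) * Af" "Am - k * Am = (1 - k) * Am"
    by (simp_all add: algebra_simps)
  ultimately show ?thesis by simp
qed

theorem theorem2:
  fixes M :: "'s measure" and G :: "'s \<Rightarrow> gender" and D :: "'s \<Rightarrow> enat"
    and Y :: "nat \<Rightarrow> enat \<Rightarrow> 's \<Rightarrow> real" and Yobs :: "nat \<Rightarrow> 's \<Rightarrow> real"
    and d d' a :: nat
  assumes "prob_space M"
    and meas_cells: "\<And>g e. cell M G D g e \<in> sets M"
    and integ: "\<And>b e. integrable M (Y b e)"
    and consistency: "\<And>b x. x \<in> space M \<Longrightarrow> Yobs b x = Y b (D x) x"
    and d_pos: "1 \<le> d"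
    and ages: "d \<le> a" "a < d'"
    and pos_cells: "\<And>g. measure M (cell M G D g (enat d)) \<noteq> 0"
                   "\<And>g. measure M (cell M G D g (enat d')) \<noteq> 0"
    and NA: "\<And>g. no_anticipation M G D Y g d" "\<And>g. no_anticipation M G D Y g d'"
    and nz: "APO M G D Y Female (enat d) \<infinity> a \<noteq> 0" "APO M G D Y Male (enat d) \<infinity> a \<noteq> 0"
            "APO M G D Y Male (enat d) (enat d) a \<noteq> 0"
            "cexp M (cell M G D Male (enat d)) (Yobs a) \<noteq> 0"
            "delta_APO M G D Yobs Male d d' a \<noteq> 0"
    and ratio: "gamma_PT M G D Y Female d d' a / APO M G D Y Female (enat d) \<infinity> a
              = gamma_PT M G D Y Male d d' a / APO M G D Y Male (enat d) \<infinity> a"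
  shows "Delta_rho M G D Y (enat d) a =
           cexp M (cell M G D Female (enat d)) (Yobs a) / cexp M (cell M G D Male (enat d)) (Yobs a)
           - delta_APO M G D Yobs Female d d' a / delta_APO M G D Yobs Male d d' a"
proof -
  have delta: "delta_APO M G D Yobs g d d' a
                 = APO M G D Y g (enat d) \<infinity> a - gamma_PT M G D Y g d d' a" for g
    using delta_APO_eq_APO_never_minus_gamma_PT[OF meas_cells integ consistency d_pos ages NA] .
  have "delta_APO M G D Yobs Female d d' a / delta_APO M G D Yobs Male d d' a
          = rho M G D Y (enat d) \<infinity> a"
    unfolding delta rho_def using nz(1,2) nz(5)[unfolded delta] ratio
    by (rule ratio_minus_proportional_bias)
  moreover have "cexp M (cell M G D g (enat d)) (Yobs a) = APO M G D Y g (enat d) (enat d) a" for g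
    using meas_cells consistency by (rule cexp_observed_eq_APO)
  ultimately show ?thesis
    unfolding Delta_rho_def rho_def by simp
qed

end
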